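(* Let $f\in C^2(\mathbb R)$ and let $u:[0,\infty)\times\mathbb R\to\mathbb R$ be bounded and continuous. Then there exists a Lagrangian parameterization $\chi$ associated with $u$. Consequently, every continuous broad solution with source $\mathfrak g$ is a continuous Lagrangian solution (with respect to any Lagrangian parameterization) with the same source $\mathfrak g$.
   Context: $\lambda(t,x):=f'(u(t,x))$. A characteristic curve of $u$ is an absolutely continuous function $\gamma$ on an interval of $[0,\infty)$ with $\dot\gamma(t)=\lambda(t,\gamma(t))$ for a.e. $t$. A Lagrangian parameterization associated with $u$ is a continuous surjective map $\chi:[0,\infty)\times\mathbb R\to\mathbb R$ such that for every $y$, $t\mapsto\chi(t,y)$ is a characteristic curve defined on $[0,\infty)$, and for every $t$, $y\mapsto\chi(t,y)$ is nondecreasing. $u$ is a continuous broad solution with source $\mathfrak g$ (bounded Borel) if $\frac{d}{dt}u(t,\gamma(t))=\mathfrak g(t,\gamma(t))$ in the sense of distributions for every characteristic curve $\gamma$; it is a continuous Lagrangian solution with parameterization $\chi$ and source $\mathfrak g$ if $\frac{d}{dt}u(t,\chi(t,y))=\mathfrak g(t,\chi(t,y))$ in $\mathcal D'((0,\infty))$ for every $y$. *)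

theory Defs
  imports "HOL-Analysis.Analysis"
begin

definition C2 :: "(real \<Rightarrow> real) \<Rightarrow> bool" where
  "C2 f \<longleftrightarrow> (\<forall>x. f differentiable (at x)) \<and> (\<forall>x. deriv f differentiable (at x))
            \<and> continuous_on UNIV (deriv (deriv f))"

definition abs_cont_on :: "real set \<Rightarrow> (real \<Rightarrow> real) \<Rightarrow> bool" where
  "abs_cont_on I g \<longleftrightarrow>
     (\<forall>e>0. \<exists>d>0. \<forall>S. finite S \<and> (\<forall>(a,b)\<in>S. a \<le> b \<and> {a..b} \<subseteq> I)
        \<and> pairwise (\<lambda>p q. {fst p<..<snd p} \<inter> {fst q<..<snd q} = {}) S
        \<and> (\<Sum>(a,b)\<in>S. b - a) < d \<longrightarrow> (\<Sum>(a,b)\<in>S. \<bar>g b - g a\<bar>) < e)"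

definition loc_abs_cont_on :: "real set \<Rightarrow> (real \<Rightarrow> real) \<Rightarrow> bool" where
  "loc_abs_cont_on I g \<longleftrightarrow> (\<forall>a b. {a..b} \<subseteq> I \<longrightarrow> abs_cont_on {a..b} g)"

definition char_speed :: "(real \<Rightarrow> real) \<Rightarrow> (real \<times> real \<Rightarrow> real) \<Rightarrow> real \<Rightarrow> real \<Rightarrow> real" where
  "char_speed f u t x = deriv f (u (t, x))"

definition char_curve :: "(real \<Rightarrow> real) \<Rightarrow> (real \<times> real \<Rightarrow> real) \<Rightarrow> real set \<Rightarrow> (real \<Rightarrow> real) \<Rightarrow> bool" where
  "char_curve f u I \<gamma> \<longleftrightarrow> is_interval I \<and> I \<subseteq> {0..} \<and> loc_abs_cont_on I \<gamma>
     \<and> (AE t in lborel. t \<in> I \<longrightarrow> (\<gamma> has_real_derivative char_speed f u t (\<gamma> t)) (at t))"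

definition lagrangian_param :: "(real \<Rightarrow> real) \<Rightarrow> (real \<times> real \<Rightarrow> real) \<Rightarrow> (real \<times> real \<Rightarrow> real) \<Rightarrow> bool" where
  "lagrangian_param f u X \<longleftrightarrow> continuous_on ({0..} \<times> UNIV) X
     \<and> X ` ({0..} \<times> UNIV) = UNIV
     \<and> (\<forall>y. char_curve f u {0..} (\<lambda>t. X (t, y)))
     \<and> (\<forall>t\<ge>0. mono (\<lambda>y. X (t, y)))"

definition test_fun :: "real set \<Rightarrow> (real \<Rightarrow> real) \<Rightarrow> bool" where
  "test_fun U \<phi> \<longleftrightarrow> (\<forall>k x. ((deriv ^^ k) \<phi>) differentiable (at x))
     \<and> compact (closure {x. \<phi> x \<noteq> 0}) \<and> closure {x. \<phi> x \<noteq> 0} \<subseteq> U"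

definition distr_deriv_eq :: "real set \<Rightarrow> (real \<Rightarrow> real) \<Rightarrow> (real \<Rightarrow> real) \<Rightarrow> bool" where
  "distr_deriv_eq U v w \<longleftrightarrow> (\<forall>\<phi>. test_fun U \<phi> \<longrightarrow>
     (LINT t|lborel. v t * deriv \<phi> t) = - (LINT t|lborel. w t * \<phi> t))"

definition broad_solution :: "(real \<Rightarrow> real) \<Rightarrow> (real \<times> real \<Rightarrow> real) \<Rightarrow> (real \<times> real \<Rightarrow> real) \<Rightarrow> bool" where
  "broad_solution f u g \<longleftrightarrow> continuous_on ({0..} \<times> UNIV) u \<and>
     (\<forall>I \<gamma>. char_curve f u I \<gamma> \<longrightarrow>
        distr_deriv_eq (interior I) (\<lambda>t. u (t, \<gamma> t)) (\<lambda>t. g (t, \<gamma> t)))"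

definition lagrangian_solution :: "(real \<Rightarrow> real) \<Rightarrow> (real \<times> real \<Rightarrow> real) \<Rightarrow> (real \<times> real \<Rightarrow> real) \<Rightarrow> (real \<times> real \<Rightarrow> real) \<Rightarrow> bool" where
  "lagrangian_solution f u X g \<longleftrightarrow> continuous_on ({0..} \<times> UNIV) u \<and> lagrangian_param f u X \<and>
     (\<forall>y. distr_deriv_eq {0<..} (\<lambda>t. u (t, X (t, y))) (\<lambda>t. g (t, X (t, y))))"

end

theory Submission
  imports Defs "HOL-Complex_Analysis.Great_Picard"
begin

text \<open>The speed \<open>\<lambda> = f' \<circ> u\<close> is continuous and bounded by some \<open>M\<close>, and characteristics are
obtained as limits of Euler polygons with mesh \<open>h\<close>. In each step the speed \<open>\<lambda>(kh,\<cdot>)\<close> is replaced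
by its inf-convolution with \<open>|\<cdot>|/h\<close>; this is \<open>1/h\<close>-Lipschitz, so the Euler step
\<open>x \<mapsto> x + h \<lambda>\<^sub>h(x)\<close> is nondecreasing and the polygons are ordered by their initial point, while
being \<open>M\<close>-Lipschitz in time. To gain equicontinuity in the label, the initial point \<open>y\<close> is traded
for the label \<open>s = y + \<Sum>\<^sub>j w\<^sub>j arctan(x\<^sub>j(y))\<close>, which is increasing in \<open>y\<close> and grows at least
quadratically in the separation of two polygons at any time. An Arzela-Ascoli diagonal argument
then yields a limit \<open>\<chi>\<close>, continuous, monotone in the label and Lipschitz in time; continuity of
\<open>\<lambda>\<close> makes the slope estimates for the polygons pass to the limit, giving \<open>\<chi>' = \<lambda>(t,\<chi>)\<close> for
\<open>t > 0\<close>, and \<open>|\<chi>(0,s) - s| \<le> 2\<close> gives surjectivity. The second claim is immediate, since every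
\<open>t \<mapsto> \<chi>(t,y)\<close> is a characteristic curve on \<open>[0,\<infinity>)\<close>.\<close>

lemma arctan_diff_ge:
  assumes "a \<le> b" "\<bar>a\<bar> \<le> R" "\<bar>b\<bar> \<le> R"
  shows "(b - a) / (1 + R\<^sup>2) \<le> arctan b - arctan a"
proof (cases "a = b")
  case True then show ?thesis by simp
next
  case False
  then have ab: "a < b" using assms by simp
  obtain z where z: "a < z" "z < b" "arctan b - arctan a = (b - a) * inverse (1 + z\<^sup>2)"
    using MVT2[OF ab, of arctan "\<lambda>x. inverse (1 + x\<^sup>2)"] DERIV_arctan by blast
  have "\<bar>z\<bar> \<le> R" using z assms by (auto simp: abs_le_iff)
  then have "z\<^sup>2 \<le> R\<^sup>2" by (metis abs_le_square_iff abs_of_nonneg abs_ge_zero order.trans)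
  then have "inverse (1 + R\<^sup>2) \<le> inverse (1 + z\<^sup>2)"
    by (intro le_imp_inverse_le) (auto simp: add_pos_nonneg)
  then have "(b - a) * inverse (1 + R\<^sup>2) \<le> (b - a) * inverse (1 + z\<^sup>2)"
    using ab by (intro mult_left_mono) auto
  then show ?thesis using z(3) by (simp add: divide_inverse)
qed

lemma weighted_sum_bounds:
  fixes c v :: "'i \<Rightarrow> real"
  assumes "\<And>j. j \<in> I \<Longrightarrow> 0 \<le> c j"
    and "\<And>j. j \<in> I \<Longrightarrow> c j \<noteq> 0 \<Longrightarrow> A \<le> v j \<and> v j \<le> B"
  shows "A * sum c I \<le> (\<Sum>j\<in>I. c j * v j) \<and> (\<Sum>j\<in>I. c j * v j) \<le> B * sum c I"
proof -
  have lower: "A * c j \<le> c j * v j" if "j \<in> I" for j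
    using assms[OF that] by (cases "c j = 0") (auto simp: mult.commute intro: mult_left_mono)
  have upper: "c j * v j \<le> B * c j" if "j \<in> I" for j
    using assms[OF that] by (cases "c j = 0") (auto simp: mult.commute intro: mult_left_mono)
  show ?thesis using sum_mono[of I, OF lower] sum_mono[of I, OF upper]
    by (simp add: sum_distrib_left)
qed

lemma grid_block_within:
  fixes h w t0 :: real
  assumes h: "0 < h" and hw: "4 * h \<le> w" and t0: "0 \<le> t0"
  obtains j0 m :: nat
  where "t0 \<le> real j0 * h" "(real j0 + real m) * h \<le> t0 + w" "w / 2 \<le> real m * h"
proof -
  define j0 where "j0 = nat \<lceil>t0 / h\<rceil>"
  have j0r: "real j0 = of_int \<lceil>t0 / h\<rceil>" using t0 h by (simp add: j0_def)
  have "t0 / h \<le> real j0" "real j0 < t0 / h + 1" using j0r ceiling_correct[of "t0/h"] by linarith+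
  then have j0_lo: "t0 \<le> real j0 * h" and j0_hi: "real j0 * h < t0 + h"
    using h by (simp_all add: divide_le_eq field_simps)
  define m where "m = nat \<lfloor>w / h\<rfloor> - 1"
  have wh: "4 \<le> w / h" using hw h by (simp add: le_divide_eq mult.commute)
  then have "4 \<le> \<lfloor>w / h\<rfloor>" by (simp add: le_floor_iff)
  then have "1 \<le> nat \<lfloor>w / h\<rfloor>" "4 \<le> \<lfloor>w / h\<rfloor>" by (simp_all add: le_nat_iff)
  then have "real m = of_int \<lfloor>w / h\<rfloor> - 1" unfolding m_def by (simp add: of_nat_diff)
  then have m: "w / h - 2 \<le> real m" "real m \<le> w / h - 1" using floor_correct[of "w/h"] by linarith+
  have "w - 2 * h \<le> real m * h" using m(1) h by (simp add: field_simps)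
  then have "w / 2 \<le> real m * h" using hw by linarith
  moreover have "real m * h \<le> w - h" using m(2) h by (simp add: field_simps)
  ultimately show ?thesis using that[OF j0_lo, of m] j0_hi by (simp add: algebra_simps)
qed

lemma lipschitz_imp_loc_abs_cont_on:
  fixes \<gamma> :: "real \<Rightarrow> real"
  assumes M: "0 < M" and lip: "\<And>t t'. t \<in> I \<Longrightarrow> t' \<in> I \<Longrightarrow> \<bar>\<gamma> t' - \<gamma> t\<bar> \<le> M * \<bar>t' - t\<bar>"
  shows "loc_abs_cont_on I \<gamma>"
  unfolding loc_abs_cont_on_def abs_cont_on_def
proof (intro allI impI)
  fix a b e :: real assume ab: "{a..b} \<subseteq> I" and e: "0 < e"
  show "\<exists>d>0. \<forall>S. finite S \<and> (\<forall>(a', b')\<in>S. a' \<le> b' \<and> {a'..b'} \<subseteq> {a..b}) \<and>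
      pairwise (\<lambda>p q. {fst p<..<snd p} \<inter> {fst q<..<snd q} = {}) S \<and> (\<Sum>(a, b)\<in>S. b - a) < d \<longrightarrow>
      (\<Sum>(a, b)\<in>S. \<bar>\<gamma> b - \<gamma> a\<bar>) < e"
  proof (intro exI[of _ "e / M"] conjI allI impI)
    show "0 < e / M" using e M by simp
    fix S :: "(real \<times> real) set"
    assume S: "finite S \<and> (\<forall>(a', b')\<in>S. a' \<le> b' \<and> {a'..b'} \<subseteq> {a..b}) \<and>
      pairwise (\<lambda>p q. {fst p<..<snd p} \<inter> {fst q<..<snd q} = {}) S \<and> (\<Sum>(a, b)\<in>S. b - a) < e / M"
    have "(\<Sum>(a, b)\<in>S. \<bar>\<gamma> b - \<gamma> a\<bar>) \<le> (\<Sum>(a, b)\<in>S. M * (b - a))"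
    proof (rule sum_mono)
      fix p assume p: "p \<in> S"
      obtain a' b' where p_eq: "p = (a', b')" by fastforce
      have "a' \<le> b'" "{a'..b'} \<subseteq> {a..b}" using S p p_eq by auto
      then have "a' \<in> I" "b' \<in> I" using ab by auto
      then show "(case p of (a, b) \<Rightarrow> \<bar>\<gamma> b - \<gamma> a\<bar>) \<le> (case p of (a, b) \<Rightarrow> M * (b - a))"
        using lip[of a' b'] \<open>a' \<le> b'\<close> p_eq by simp
    qed
    also have "\<dots> = M * (\<Sum>(a, b)\<in>S. b - a)" by (simp add: sum_distrib_left case_prod_unfold)
    also have "\<dots> < M * (e / M)" using S M by (intro mult_strict_left_mono) auto
    also have "\<dots> = e" using M by simp
    finally show "(\<Sum>(a, b)\<in>S. \<bar>\<gamma> b - \<gamma> a\<bar>) < e" .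
  qed
qed

lemma has_real_derivative_if_slope_estimates:
  assumes "\<And>r. 0 < r \<Longrightarrow> \<exists>\<delta>>0. \<forall>x. \<bar>x - t\<bar> < \<delta> \<longrightarrow> \<bar>g x - g t - (x - t) * c\<bar> \<le> r * \<bar>x - t\<bar>"
  shows "(g has_real_derivative c) (at t)"
proof -
  have "((\<lambda>x. (g x - g t) / (x - t)) \<longlongrightarrow> c) (at t)"
  proof (unfold LIM_eq, intro allI impI)
    fix r :: real assume r: "0 < r"
    then obtain \<delta> where \<delta>: "0 < \<delta>" and est: "\<And>x. \<bar>x - t\<bar> < \<delta> \<Longrightarrow> \<bar>g x - g t - (x - t) * c\<bar> \<le> r / 2 * \<bar>x - t\<bar>"
      using assms[of "r / 2"] by auto
    show "\<exists>\<sigma>>0. \<forall>x. x \<noteq> t \<and> norm (x - t) < \<sigma> \<longrightarrow> norm ((g x - g t) / (x - t) - c) < r"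
    proof (intro exI[of _ \<delta>] conjI \<delta> allI impI)
      fix x assume x: "x \<noteq> t \<and> norm (x - t) < \<delta>"
      then have "(g x - g t) / (x - t) - c = (g x - g t - (x - t) * c) / (x - t)" by (simp add: field_simps)
      then have "\<bar>(g x - g t) / (x - t) - c\<bar> = \<bar>g x - g t - (x - t) * c\<bar> / \<bar>x - t\<bar>"
        by (simp add: abs_divide)
      also have "\<dots> \<le> r / 2" using est[of x] x by (simp add: divide_le_eq)
      finally show "norm ((g x - g t) / (x - t) - c) < r" using r by simp
    qed
  qed
  then show ?thesis by (simp add: has_field_derivative_iff)
qed

section \<open>A monotone Euler scheme\<close>

locale bounded_speed =
  fixes lam :: "real \<Rightarrow> real \<Rightarrow> real" and M :: real
  assumes M_ge_1: "M \<ge> 1"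
    and lam_bound: "\<And>t z. t \<ge> 0 \<Longrightarrow> \<bar>lam t z\<bar> \<le> M"
    and lam_cont: "continuous_on ({0..} \<times> UNIV) (\<lambda>p. lam (fst p) (snd p))"
begin

definition mesh :: "nat \<Rightarrow> real" where "mesh n = 1 / (real n + 1)"

lemma mesh_pos: "mesh n > 0" by (simp add: mesh_def)
lemma abs_div_mesh_nonneg: "0 \<le> \<bar>a\<bar> / mesh n" using mesh_pos[of n] by simp
lemma grid_time_nonneg: "0 \<le> real k * mesh n" using mesh_pos[of n] by simp

lemma mesh_cell_containing:
  assumes "0 \<le> t"
  obtains k where "real k * mesh n \<le> t" "t < (real k + 1) * mesh n"
proof -
  define k where "k = nat \<lfloor>t / mesh n\<rfloor>"
  have "real k = of_int \<lfloor>t / mesh n\<rfloor>" using assms mesh_pos[of n] by (simp add: k_def)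
  then have "real k \<le> t / mesh n" "t / mesh n < real k + 1" by linarith+
  then show ?thesis using that[of k] mesh_pos[of n] by (simp add: le_divide_eq divide_less_eq)
qed

lemma mesh_le_inverse: "0 < c \<Longrightarrow> c \<le> real n + 1 \<Longrightarrow> mesh n \<le> 1 / c"
  unfolding mesh_def by (intro divide_left_mono) auto

lemma mesh_eventually_less:
  assumes "0 < \<delta>"
  shows "\<exists>N. \<forall>n\<ge>N. mesh n < \<delta>"
proof (intro exI[of _ "nat \<lceil>2 / \<delta>\<rceil>"] allI impI)
  fix n assume "nat \<lceil>2 / \<delta>\<rceil> \<le> n"
  then have "2 / \<delta> \<le> real n + 1" by linarith
  then have "mesh n \<le> \<delta> / 2" using mesh_le_inverse[of "2 / \<delta>" n] assms by simp
  then show "mesh n < \<delta>" using assms by linarith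
qed

definition reg_speed :: "nat \<Rightarrow> nat \<Rightarrow> real \<Rightarrow> real" where
  "reg_speed n k x = Inf (range (\<lambda>z. lam (real k * mesh n) z + \<bar>x - z\<bar> / mesh n))"

lemma reg_speed_bdd: "bdd_below (range (\<lambda>z. lam (real k * mesh n) z + \<bar>x - z\<bar> / mesh n))"
proof -
  have "- M \<le> lam (real k * mesh n) z + \<bar>x - z\<bar> / mesh n" for z
    using lam_bound[OF grid_time_nonneg, of k n z] abs_div_mesh_nonneg[of "x-z" n] by (simp add: abs_le_iff)
  then show ?thesis by (meson bdd_belowI2)
qed

lemma reg_speed_le: "reg_speed n k x \<le> lam (real k * mesh n) z + \<bar>x - z\<bar> / mesh n"
  unfolding reg_speed_def by (rule cInf_lower[OF _ reg_speed_bdd]) auto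

lemma reg_speed_le_lam: "reg_speed n k x \<le> lam (real k * mesh n) x"
  using reg_speed_le[of n k x x] by simp

lemma reg_speed_ge:
  assumes "\<And>z. c \<le> lam (real k * mesh n) z + \<bar>x - z\<bar> / mesh n"
  shows "c \<le> reg_speed n k x"
  unfolding reg_speed_def by (rule cInf_greatest) (use assms in auto)

lemma reg_speed_bound: "\<bar>reg_speed n k x\<bar> \<le> M"
proof -
  have "-M \<le> reg_speed n k x"
    by (rule reg_speed_ge)
      (use lam_bound[OF grid_time_nonneg, of k n] abs_div_mesh_nonneg[of _ n] in \<open>smt (verit)\<close>)
  moreover have "reg_speed n k x \<le> M"
    using reg_speed_le_lam[of n k x] lam_bound[OF grid_time_nonneg, of k n x] by (simp add: abs_le_iff)
  ultimately show ?thesis by simp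
qed

text \<open>Points \<open>z\<close> farther than \<open>2Mh\<close> from \<open>x\<close> cannot realize the infimum, since there the penalty
\<open>|x - z|/h\<close> exceeds the oscillation \<open>2M\<close> of \<open>\<lambda>\<close>.\<close>
lemma reg_speed_lower:
  assumes "c \<le> M" and "\<And>z. \<bar>z - x\<bar> \<le> 2 * M * mesh n \<Longrightarrow> c \<le> lam (real k * mesh n) z"
  shows "c \<le> reg_speed n k x"
proof (rule reg_speed_ge)
  fix z
  show "c \<le> lam (real k * mesh n) z + \<bar>x - z\<bar> / mesh n"
  proof (cases "\<bar>z - x\<bar> \<le> 2 * M * mesh n")
    case True then show ?thesis using assms(2)[of z] abs_div_mesh_nonneg[of "x-z" n] by simp
  next
    case False
    then have "\<bar>x - z\<bar> / mesh n \<ge> 2 * M" using mesh_pos[of n]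
      by (simp add: le_divide_eq abs_minus_commute mult.commute mult.left_commute)
    moreover have "lam (real k * mesh n) z \<ge> -M" using lam_bound[OF grid_time_nonneg, of k n z]
      by (simp add: abs_le_iff)
    ultimately show ?thesis using assms(1) by linarith
  qed
qed

lemma reg_speed_close:
  assumes "c \<le> M" and "\<And>z. \<bar>z - x\<bar> \<le> 2 * M * mesh n \<Longrightarrow> \<bar>lam (real k * mesh n) z - c\<bar> < e"
  shows "\<bar>reg_speed n k x - c\<bar> \<le> e"
proof -
  have "0 \<le> 2 * M * mesh n" using M_ge_1 mesh_pos[of n] by simp
  then have "reg_speed n k x \<le> c + e"
    using reg_speed_le_lam[of n k x] assms(2)[of x] by (simp add: abs_less_iff)
  moreover have "c - e \<le> reg_speed n k x"
  proof (rule reg_speed_lower)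
    show "c - e \<le> M" using assms(1) assms(2)[of x] \<open>0 \<le> 2 * M * mesh n\<close> by simp
    show "c - e \<le> lam (real k * mesh n) z" if "\<bar>z - x\<bar> \<le> 2 * M * mesh n" for z
      using assms(2)[OF that] by (simp add: abs_less_iff)
  qed
  ultimately show ?thesis by (simp add: abs_le_iff)
qed

lemma reg_speed_lipschitz: "mesh n * reg_speed n k x \<le> mesh n * reg_speed n k x' + \<bar>x - x'\<bar>"
proof -
  have "reg_speed n k x - \<bar>x - x'\<bar> / mesh n \<le> reg_speed n k x'"
  proof (rule reg_speed_ge)
    fix z
    have "reg_speed n k x \<le> lam (real k * mesh n) z + \<bar>x - z\<bar> / mesh n" by (rule reg_speed_le)
    moreover have "\<bar>x - z\<bar> / mesh n \<le> \<bar>x - x'\<bar> / mesh n + \<bar>x' - z\<bar> / mesh n"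
      using mesh_pos[of n] by (simp add: add_divide_distrib[symmetric] divide_right_mono)
    ultimately show "reg_speed n k x - \<bar>x - x'\<bar> / mesh n \<le> lam (real k * mesh n) z + \<bar>x' - z\<bar> / mesh n"
      by linarith
  qed
  then show ?thesis using mesh_pos[of n] by (simp add: field_simps)
qed

lemma euler_step_mono:
  "x \<le> x' \<Longrightarrow> x + mesh n * reg_speed n k x \<le> x' + mesh n * reg_speed n k x'"
  using reg_speed_lipschitz[of n k x x'] by simp

lemma euler_step_cont: "continuous_on UNIV (\<lambda>x. x + mesh n * reg_speed n k x)"
proof -
  have "\<bar>(x + mesh n * reg_speed n k x) - (x' + mesh n * reg_speed n k x')\<bar> \<le> 2 * \<bar>x - x'\<bar>" for x x'
    using reg_speed_lipschitz[of n k x x'] reg_speed_lipschitz[of n k x' x]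
      abs_ge_self[of "x - x'"] abs_ge_minus_self[of "x - x'"]
    by (simp add: abs_le_iff abs_minus_commute)
  then have "2-lipschitz_on UNIV (\<lambda>x. x + mesh n * reg_speed n k x)"
    by (intro lipschitz_onI) (auto simp: dist_real_def)
  then show ?thesis by (rule lipschitz_on_continuous_on)
qed

primrec node :: "nat \<Rightarrow> real \<Rightarrow> nat \<Rightarrow> real" where
  "node n y 0 = y"
| "node n y (Suc k) = node n y k + mesh n * reg_speed n k (node n y k)"

definition node_speed :: "nat \<Rightarrow> real \<Rightarrow> nat \<Rightarrow> real" where
  "node_speed n y k = reg_speed n k (node n y k)"

definition euler :: "nat \<Rightarrow> real \<Rightarrow> real \<Rightarrow> real" where
  "euler n t y = node n y (nat \<lfloor>t / mesh n\<rfloor>)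
     + (t - real (nat \<lfloor>t / mesh n\<rfloor>) * mesh n) * node_speed n y (nat \<lfloor>t / mesh n\<rfloor>)"

lemma node_Suc_eq: "node n y (Suc k) = node n y k + mesh n * node_speed n y k"
  by (simp add: node_speed_def)

lemma node_speed_bound: "\<bar>node_speed n y k\<bar> \<le> M"
  by (simp add: node_speed_def reg_speed_bound)

lemma node_mono: "y \<le> y' \<Longrightarrow> node n y k \<le> node n y' k"
  by (induction k) (auto intro: euler_step_mono)

lemma node_cont: "continuous_on UNIV (\<lambda>y. node n y k)"
proof (induction k)
  case 0 then show ?case by simp
next
  case (Suc k)
  have "continuous_on UNIV ((\<lambda>x. x + mesh n * reg_speed n k x) \<circ> (\<lambda>y. node n y k))"
    by (rule continuous_on_compose[OF Suc]) (rule continuous_on_subset[OF euler_step_cont], simp)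
  then show ?case by (simp add: o_def)
qed

lemma node_eq_sum: "node n y k = y + (\<Sum>j<k. mesh n * node_speed n y j)"
  by (induction k) (simp_all del: node.simps(2) add: node_Suc_eq)

lemma euler_grid: "euler n (real k * mesh n) y = node n y k"
  using mesh_pos[of n] by (simp add: euler_def)

lemma euler_0: "euler n 0 y = y"
  using euler_grid[of n 0 y] by simp

lemma euler_cell:
  assumes "real k * mesh n \<le> t" "t \<le> (real k + 1) * mesh n"
  shows "euler n t y = node n y k + (t - real k * mesh n) * node_speed n y k"
proof (cases "t < (real k + 1) * mesh n")
  case True
  have "real k \<le> t / mesh n" using assms(1) mesh_pos[of n] by (simp add: le_divide_eq)
  moreover have "t / mesh n < real k + 1" using True mesh_pos[of n] by (simp add: divide_less_eq)
  ultimately have "\<lfloor>t / mesh n\<rfloor> = int k" by (simp add: floor_eq_iff)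
  then have "nat \<lfloor>t / mesh n\<rfloor> = k" by simp
  then show ?thesis unfolding euler_def by simp
next
  case False
  then have t: "t = real (Suc k) * mesh n" using assms(2) by simp
  show ?thesis unfolding t euler_grid node_Suc_eq by (simp add: algebra_simps)
qed

lemma euler_mono:
  assumes "0 \<le> t" "y \<le> y'"
  shows "euler n t y \<le> euler n t y'"
proof -
  obtain k where k: "real k * mesh n \<le> t" "t < (real k + 1) * mesh n"
    using mesh_cell_containing[OF assms(1)] by blast
  define \<theta> where "\<theta> = (t - real k * mesh n) / mesh n"
  have \<theta>: "0 \<le> \<theta>" "\<theta> \<le> 1" using k mesh_pos[of n] by (auto simp: \<theta>_def divide_simps algebra_simps)
  have convex_comb: "euler n t z = (1 - \<theta>) * node n z k + \<theta> * node n z (Suc k)" for z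
  proof -
    have "euler n t z = node n z k + (t - real k * mesh n) * node_speed n z k"
      using euler_cell[of k n t] k by simp
    also have "\<dots> = (1 - \<theta>) * node n z k + \<theta> * node n z (Suc k)"
      unfolding node_Suc_eq \<theta>_def using mesh_pos[of n] by (simp add: field_simps)
    finally show ?thesis .
  qed
  show ?thesis
    unfolding convex_comb using \<theta> node_mono[OF assms(2), of n k] node_mono[OF assms(2), of n "Suc k"]
    by (intro add_mono mult_left_mono) auto
qed

definition cell_time :: "nat \<Rightarrow> nat \<Rightarrow> real \<Rightarrow> real" where
  "cell_time n j t = max 0 (min (mesh n) (t - real j * mesh n))"

lemma cell_time_sum: "0 \<le> t \<Longrightarrow> (\<Sum>j<K. cell_time n j t) = min t (real K * mesh n)"
proof (induction K)
  case 0 then show ?case by simp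
next
  case (Suc K)
  then show ?case using mesh_pos[of n] by (simp add: cell_time_def algebra_simps max_def min_def)
qed

lemma cell_time_mono: "t \<le> t' \<Longrightarrow> cell_time n j t \<le> cell_time n j t'"
  unfolding cell_time_def by (simp add: max_def min_def)

lemma cell_time_diff_nonzero:
  "cell_time n j t' - cell_time n j t \<noteq> 0 \<Longrightarrow> t \<le> t' \<Longrightarrow> real j * mesh n < t' \<and> t < (real j + 1) * mesh n"
  unfolding cell_time_def by (auto simp: max_def min_def algebra_simps split: if_splits)

lemma euler_eq_sum:
  assumes "0 \<le> t" "t < real K * mesh n"
  shows "euler n t y = y + (\<Sum>j<K. cell_time n j t * node_speed n y j)"
proof -
  obtain k where k: "real k * mesh n \<le> t" "t < (real k + 1) * mesh n"
    using mesh_cell_containing[OF assms(1)] by blast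
  have "real k * mesh n < real K * mesh n" using k assms by simp
  then have kK: "Suc k \<le> K" using mesh_pos[of n] by simp
  have "(\<Sum>j<K. cell_time n j t * node_speed n y j) = (\<Sum>j<Suc k. cell_time n j t * node_speed n y j)"
  proof (rule sum.mono_neutral_right)
    show "\<forall>j\<in>{..<K} - {..<Suc k}. cell_time n j t * node_speed n y j = 0"
    proof
      fix j assume "j \<in> {..<K} - {..<Suc k}"
      then have "real (Suc k) \<le> real j" by simp
      then have "(real k + 1) * mesh n \<le> real j * mesh n" using mesh_pos[of n] by (simp add: mult_right_mono)
      then show "cell_time n j t * node_speed n y j = 0" using k by (simp add: cell_time_def)
    qed
  qed (use kK in auto)
  also have "\<dots> = (\<Sum>j<k. mesh n * node_speed n y j) + (t - real k * mesh n) * node_speed n y k"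
  proof -
    have "cell_time n j t = mesh n" if "j < k" for j
    proof -
      have "real j + 1 \<le> real k" using that by simp
      then have "(real j + 1) * mesh n \<le> real k * mesh n" using mesh_pos[of n] by (simp add: mult_right_mono)
      then show ?thesis using k by (simp add: cell_time_def algebra_simps)
    qed
    moreover have "cell_time n k t = t - real k * mesh n" using k by (simp add: cell_time_def algebra_simps)
    ultimately show ?thesis by simp
  qed
  finally show ?thesis using euler_cell[of k n t y] k by (simp add: node_eq_sum)
qed

text \<open>The increment of a polygon over \<open>[a,b]\<close> is a convex combination of the speeds of the
cells meeting \<open>[a,b]\<close>, weighted by the time spent in them.\<close>
lemma euler_increment_bounds:
  assumes "0 \<le> a" "a \<le> b"
    and "\<And>j. real j * mesh n < b \<Longrightarrow> a < (real j + 1) * mesh n \<Longrightarrow> A \<le> node_speed n y j \<and> node_speed n y j \<le> B"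
  shows "A * (b - a) \<le> euler n b y - euler n a y \<and> euler n b y - euler n a y \<le> B * (b - a)"
proof -
  obtain K :: nat where "b / mesh n < real K" using reals_Archimedean2 by blast
  then have Kb: "b < real K * mesh n" using mesh_pos[of n] by (simp add: divide_less_eq)
  define c where "c j = cell_time n j b - cell_time n j a" for j
  have "euler n b y - euler n a y = (\<Sum>j<K. c j * node_speed n y j)"
    using euler_eq_sum[of b K n y] euler_eq_sum[of a K n y] assms Kb
    by (simp add: c_def sum_subtractf[symmetric] left_diff_distrib)
  moreover have "sum c {..<K} = b - a"
    using cell_time_sum[of b n K] cell_time_sum[of a n K] assms Kb by (simp add: c_def sum_subtractf)
  moreover have "A * sum c {..<K} \<le> (\<Sum>j<K. c j * node_speed n y j) \<and>
      (\<Sum>j<K. c j * node_speed n y j) \<le> B * sum c {..<K}"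
    by (rule weighted_sum_bounds)
      (use cell_time_mono[OF assms(2)] cell_time_diff_nonzero assms(2,3) in \<open>auto simp: c_def\<close>)
  ultimately show ?thesis by simp
qed

lemma euler_increment_close:
  assumes "0 \<le> t" "0 \<le> t'"
    and "\<And>j. \<bar>real j * mesh n - t\<bar> < \<bar>t' - t\<bar> + mesh n \<Longrightarrow> \<bar>node_speed n y j - c\<bar> \<le> e"
  shows "\<bar>euler n t' y - euler n t y - (t' - t) * c\<bar> \<le> e * \<bar>t' - t\<bar>"
proof -
  have near: "c - e \<le> node_speed n y j \<and> node_speed n y j \<le> c + e"
    if "real j * mesh n < max t t'" "min t t' < (real j + 1) * mesh n" for j
  proof -
    have "\<bar>real j * mesh n - t\<bar> < \<bar>t' - t\<bar> + mesh n"
      using that mesh_pos[of n] by (auto simp: abs_less_iff algebra_simps max_def min_def split: if_splits)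
    then have "\<bar>node_speed n y j - c\<bar> \<le> e" by (rule assms(3))
    then show ?thesis unfolding abs_le_iff by linarith
  qed
  show ?thesis
  proof (cases "t \<le> t'")
    case True
    have "(c - e) * (t' - t) \<le> euler n t' y - euler n t y \<and> euler n t' y - euler n t y \<le> (c + e) * (t' - t)"
      by (rule euler_increment_bounds[OF assms(1) True]) (use near True in auto)
    then have "\<bar>euler n t' y - euler n t y - (t' - t) * c\<bar> \<le> e * (t' - t)"
      by (subst abs_le_iff) (simp add: algebra_simps)
    then show ?thesis using True by simp
  next
    case False
    have "(c - e) * (t - t') \<le> euler n t y - euler n t' y \<and> euler n t y - euler n t' y \<le> (c + e) * (t - t')"
      by (rule euler_increment_bounds[OF assms(2)]) (use near False in auto)
    then have "\<bar>euler n t' y - euler n t y - (t' - t) * c\<bar> \<le> e * (t - t')"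
      by (subst abs_le_iff) (simp add: algebra_simps)
    then show ?thesis using False by simp
  qed
qed

lemma euler_lipschitz:
  assumes "0 \<le> t" "0 \<le> t'"
  shows "\<bar>euler n t' y - euler n t y\<bar> \<le> M * \<bar>t' - t\<bar>"
  using euler_increment_close[OF assms, of n y 0 M] node_speed_bound by simp

lemma euler_bound: "0 \<le> t \<Longrightarrow> \<bar>euler n t y\<bar> \<le> \<bar>y\<bar> + M * t"
  using euler_lipschitz[of 0 t n y] euler_0[of n y] by (simp add: abs_le_iff) linarith

lemma lam_uniformly_continuous:
  assumes "0 < e"
  obtains d where "0 < d" "\<And>t z t' z'. 0 \<le> t \<Longrightarrow> t \<le> T \<Longrightarrow> \<bar>z\<bar> \<le> R \<Longrightarrow>
      0 \<le> t' \<Longrightarrow> t' \<le> T \<Longrightarrow> \<bar>z'\<bar> \<le> R \<Longrightarrow> \<bar>t' - t\<bar> + \<bar>z' - z\<bar> < d \<Longrightarrow>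
      \<bar>lam t' z' - lam t z\<bar> < e"
proof -
  let ?K = "{0..T} \<times> {-R..R}"
  have "continuous_on ?K (\<lambda>p. lam (fst p) (snd p))"
    by (rule continuous_on_subset[OF lam_cont]) auto
  then have "uniformly_continuous_on ?K (\<lambda>p. lam (fst p) (snd p))"
    by (intro compact_uniformly_continuous) (auto intro: compact_Times)
  then obtain d where d: "0 < d" "\<And>p q. p \<in> ?K \<Longrightarrow> q \<in> ?K \<Longrightarrow> dist q p < d \<Longrightarrow>
      dist (lam (fst q) (snd q)) (lam (fst p) (snd p)) < e"
    unfolding uniformly_continuous_on_def using assms by metis
  show ?thesis
  proof (rule that[OF d(1)])
    fix t z t' z'
    assume a: "0 \<le> t" "t \<le> T" "\<bar>z\<bar> \<le> R" "0 \<le> t'" "t' \<le> T" "\<bar>z'\<bar> \<le> R" "\<bar>t' - t\<bar> + \<bar>z' - z\<bar> < d"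
    have "dist (t', z') (t, z) \<le> \<bar>t' - t\<bar> + \<bar>z' - z\<bar>"
      unfolding dist_Pair_Pair dist_real_def using sqrt_sum_squares_le_sum_abs[of "t' - t" "z' - z"] by simp
    then show "\<bar>lam t' z' - lam t z\<bar> < e"
      using d(2)[of "(t,z)" "(t',z')"] a by (auto simp: dist_real_def abs_le_iff)
  qed
qed

lemma lam_isCont: "0 \<le> t \<Longrightarrow> isCont (lam t) z"
  using continuous_on_compose2[OF lam_cont, of UNIV "\<lambda>z. (t, z)"]
  by (auto intro!: continuous_intros simp: continuous_on_eq_continuous_at)

lemma euler_slope:
  assumes "0 < e"
  shows "\<exists>\<delta>>0. \<forall>n y t t'. mesh n < \<delta> \<longrightarrow> \<bar>y\<bar> \<le> R \<longrightarrow> 0 \<le> t \<longrightarrow> t \<le> T \<longrightarrow> 0 \<le> t' \<longrightarrow> t' \<le> T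
     \<longrightarrow> \<bar>t' - t\<bar> < \<delta> \<longrightarrow> \<bar>euler n t' y - euler n t y - (t' - t) * lam t (euler n t y)\<bar> \<le> e * \<bar>t' - t\<bar>"
proof -
  define R1 where "R1 = \<bar>R\<bar> + M * \<bar>T\<bar> + 4 * M + 1"
  obtain d where d: "0 < d" "\<And>t z t' z'. 0 \<le> t \<Longrightarrow> t \<le> T + 1 \<Longrightarrow> \<bar>z\<bar> \<le> R1 \<Longrightarrow>
      0 \<le> t' \<Longrightarrow> t' \<le> T + 1 \<Longrightarrow> \<bar>z'\<bar> \<le> R1 \<Longrightarrow> \<bar>t' - t\<bar> + \<bar>z' - z\<bar> < d \<Longrightarrow>
      \<bar>lam t' z' - lam t z\<bar> < e"
    using lam_uniformly_continuous[OF assms, of "T+1" R1] by metis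
  define \<delta> where "\<delta> = min (1/2) (d / (4 * M + 2))"
  have M_pos: "0 < 4 * M + 2" using M_ge_1 by simp
  have \<delta>: "0 < \<delta>" "(4 * M + 2) * \<delta> \<le> d" "M * \<delta> \<le> M"
    using d(1) M_ge_1 M_pos unfolding \<delta>_def
    by (simp, metis min.cobounded2 mult.commute pos_le_divide_eq, simp)
  show ?thesis
  proof (intro exI[of _ \<delta>] conjI allI impI \<delta>(1))
    fix n y t t'
    assume h: "mesh n < \<delta>" and y: "\<bar>y\<bar> \<le> R" and t: "0 \<le> t" "t \<le> T" and t': "0 \<le> t'" "t' \<le> T"
      and tt: "\<bar>t' - t\<bar> < \<delta>"
    have x_bound: "\<bar>euler n t y\<bar> \<le> \<bar>R\<bar> + M * \<bar>T\<bar>"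
      using euler_bound[OF t(1), of n y] y mult_left_mono[of t "\<bar>T\<bar>" M] t M_ge_1 by linarith
    have "\<bar>node_speed n y j - lam t (euler n t y)\<bar> \<le> e"
      if j: "\<bar>real j * mesh n - t\<bar> < \<bar>t' - t\<bar> + mesh n" for j
      unfolding node_speed_def
    proof (rule reg_speed_close)
      show "lam t (euler n t y) \<le> M" using lam_bound[OF t(1)] by (simp add: abs_le_iff)
      have jt: "\<bar>real j * mesh n - t\<bar> < 2 * \<delta>" using j h tt by linarith
      have "\<bar>node n y j - euler n t y\<bar> \<le> M * \<bar>real j * mesh n - t\<bar>"
        using euler_lipschitz[OF t(1) grid_time_nonneg[of j n], of n y] by (simp add: euler_grid)
      also have "\<dots> \<le> M * (2 * \<delta>)" using jt M_ge_1 by (intro mult_left_mono) auto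
      finally have node_near: "\<bar>node n y j - euler n t y\<bar> \<le> M * (2 * \<delta>)" .
      fix z assume z: "\<bar>z - node n y j\<bar> \<le> 2 * M * mesh n"
      have "M * mesh n \<le> M * \<delta>" using h M_ge_1 by simp
      then have z_near: "\<bar>z - euler n t y\<bar> \<le> 2 * M * \<delta> + M * (2 * \<delta>)" using z node_near by linarith
      then have "\<bar>real j * mesh n - t\<bar> + \<bar>z - euler n t y\<bar> < (4 * M + 2) * \<delta>"
        using jt by (simp add: algebra_simps)
      moreover have "\<bar>z\<bar> \<le> R1" "\<bar>euler n t y\<bar> \<le> R1"
        using z_near x_bound \<delta>(3) M_ge_1 unfolding R1_def by linarith+
      ultimately show "\<bar>lam (real j * mesh n) z - lam t (euler n t y)\<bar> < e"
        using j h tt t t' \<delta>(2) grid_time_nonneg[of j n]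
        by (intro d(2)) (auto simp: \<delta>_def abs_less_iff)
    qed
    then show "\<bar>euler n t' y - euler n t y - (t' - t) * lam t (euler n t y)\<bar> \<le> e * \<bar>t' - t\<bar>"
      by (rule euler_increment_close[OF t(1) t'(1)])
  qed
qed

section \<open>Relabelling\<close>

definition weight :: "nat \<Rightarrow> nat \<Rightarrow> real" where
  "weight n j = 1 / (1 + real j * mesh n) - 1 / (1 + real (Suc j) * mesh n)"

lemma weight_eq: "weight n j = mesh n / ((1 + real j * mesh n) * (1 + real (Suc j) * mesh n))"
proof -
  have "0 < 1 + real j * mesh n" "0 < 1 + real (Suc j) * mesh n"
    using grid_time_nonneg[of j n] grid_time_nonneg[of "Suc j" n] by linarith+
  then show ?thesis unfolding weight_def by (simp add: field_simps)
qed

lemma weight_nonneg: "0 \<le> weight n j"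
  unfolding weight_eq using mesh_pos[of n] grid_time_nonneg[of j n] grid_time_nonneg[of "Suc j" n] by simp

lemma weight_sum_le_1: "(\<Sum>j<K. weight n j) \<le> 1"
proof -
  have "(\<Sum>j<K. weight n j) = 1 - 1 / (1 + real K * mesh n)"
    unfolding weight_def using sum_lessThan_telescope'[of "\<lambda>j. 1 / (1 + real j * mesh n)" K] by simp
  also have "\<dots> \<le> 1" using grid_time_nonneg[of K n] by simp
  finally show ?thesis .
qed

lemma weight_ge:
  assumes "real (Suc j) * mesh n \<le> c"
  shows "mesh n / (1 + c)\<^sup>2 \<le> weight n j"
proof -
  have pos: "0 < 1 + real j * mesh n" "0 < 1 + real (Suc j) * mesh n"
    using grid_time_nonneg[of j n] grid_time_nonneg[of "Suc j" n] by linarith+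
  have "real j * mesh n \<le> real (Suc j) * mesh n" using mesh_pos[of n] by (simp add: mult_right_mono)
  then have "(1 + real j * mesh n) * (1 + real (Suc j) * mesh n) \<le> (1 + c) * (1 + c)"
    using assms pos by (intro mult_mono) auto
  moreover have "0 < 1 + c" using assms pos by linarith
  ultimately show ?thesis
    unfolding weight_eq power2_eq_square using pos mesh_pos[of n]
    by (intro divide_left_mono mult_pos_pos) auto
qed

definition horizon :: "nat \<Rightarrow> nat" where "horizon n = (n + 1) * (n + 1)"

text \<open>The weights sum to at most 1, so relabelling moves a point by at most 2; but on bounded time
intervals they are bounded below, so polygons that separate at some time have distinct labels
(\<open>relabel_gap\<close>). The sum runs over the nodes up to time \<open>horizon n \<cdot> mesh n = n + 1\<close>.\<close>
definition relabel :: "nat \<Rightarrow> real \<Rightarrow> real" where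
  "relabel n y = y + (\<Sum>j<horizon n. weight n j * arctan (node n y j))"

lemma relabel_close: "\<bar>relabel n y - y\<bar> \<le> 2"
proof -
  have "\<bar>\<Sum>j<horizon n. weight n j * arctan (node n y j)\<bar> \<le> (\<Sum>j<horizon n. weight n j * 2)"
  proof (rule order_trans[OF sum_abs], rule sum_mono)
    fix j
    have "\<bar>arctan (node n y j)\<bar> \<le> 2" using arctan_bounded[of "node n y j"] pi_less_4 by (simp add: abs_le_iff)
    then show "\<bar>weight n j * arctan (node n y j)\<bar> \<le> weight n j * 2"
      using weight_nonneg[of n j] by (simp add: abs_mult mult_left_mono)
  qed
  also have "\<dots> \<le> 2" using weight_sum_le_1[of n "horizon n"] by (simp add: sum_distrib_right[symmetric])
  finally show ?thesis by (simp add: relabel_def)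
qed

lemma relabel_mono: "y \<le> y' \<Longrightarrow> relabel n y \<le> relabel n y'"
  unfolding relabel_def
  by (intro add_mono sum_mono mult_left_mono arctan_monotone' node_mono weight_nonneg) auto

lemma relabel_cont: "continuous_on UNIV (relabel n)"
  unfolding relabel_def
  by (intro continuous_intros continuous_on_compose2[OF continuous_on_arctan node_cont]) auto

lemma relabel_diff_ge_sum:
  assumes "y \<le> y'" "J \<subseteq> {..<horizon n}"
  shows "(\<Sum>j\<in>J. weight n j * (arctan (node n y' j) - arctan (node n y j))) \<le> relabel n y' - relabel n y"
proof -
  have nonneg: "0 \<le> weight n j * (arctan (node n y' j) - arctan (node n y j))" for j
    using weight_nonneg[of n j] arctan_monotone'[OF node_mono[OF assms(1)]] by simp
  have "(\<Sum>j\<in>J. weight n j * (arctan (node n y' j) - arctan (node n y j)))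
      \<le> (\<Sum>j<horizon n. weight n j * (arctan (node n y' j) - arctan (node n y j)))"
    by (rule sum_mono2[OF _ assms(2)]) (use nonneg in auto)
  also have "\<dots> = (\<Sum>j<horizon n. weight n j * arctan (node n y' j)) - (\<Sum>j<horizon n. weight n j * arctan (node n y j))"
    by (simp add: right_diff_distrib sum_subtractf)
  finally show ?thesis unfolding relabel_def using assms(1) by linarith
qed

lemma relabel_term_ge:
  assumes y: "y \<le> y'" "\<bar>y\<bar> \<le> R" "\<bar>y'\<bar> \<le> R"
    and j: "0 \<le> t0" "t0 \<le> real j * mesh n" "real (Suc j) * mesh n \<le> T + 1"
    and gap: "\<delta> \<le> euler n t0 y' - euler n t0 y" "4 * M * (real j * mesh n - t0) \<le> \<delta>"
  shows "mesh n / (2 + T)\<^sup>2 * ((\<delta> / 2) / (1 + (R + M * (T + 1))\<^sup>2))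
    \<le> weight n j * (arctan (node n y' j) - arctan (node n y j))"
proof -
  have jh: "0 \<le> real j * mesh n" "real j * mesh n \<le> T + 1"
    using j mesh_pos[of n] by (auto simp: algebra_simps)
  have node_gap: "\<delta> / 2 \<le> node n y' j - node n y j"
    using euler_lipschitz[OF j(1) jh(1), of n y] euler_lipschitz[OF j(1) jh(1), of n y'] j(2) gap
      euler_grid[of n j y] euler_grid[of n j y'] by (simp add: abs_le_iff)
  have "M * (real j * mesh n) \<le> M * (T + 1)" using jh(2) M_ge_1 by (intro mult_left_mono) auto
  then have node_bound: "\<bar>node n z j\<bar> \<le> R + M * (T + 1)" if "\<bar>z\<bar> \<le> R" for z
    using euler_bound[OF jh(1), of n z] euler_grid[of n j z] that by simp
  have "(\<delta> / 2) / (1 + (R + M * (T + 1))\<^sup>2) \<le> (node n y' j - node n y j) / (1 + (R + M * (T + 1))\<^sup>2)"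
    using node_gap by (intro divide_right_mono) auto
  also have "\<dots> \<le> arctan (node n y' j) - arctan (node n y j)"
    by (rule arctan_diff_ge) (use node_mono[OF y(1)] node_bound y in auto)
  finally have "(\<delta> / 2) / (1 + (R + M * (T + 1))\<^sup>2) \<le> arctan (node n y' j) - arctan (node n y j)" .
  moreover have "mesh n / (1 + (T + 1))\<^sup>2 \<le> weight n j" by (rule weight_ge[OF j(3)])
  moreover have "0 \<le> \<delta>" using gap(2) j(2) M_ge_1 by (smt (verit) mult_nonneg_nonneg)
  ultimately show ?thesis using mesh_pos[of n] weight_nonneg[of n j] by (intro mult_mono) (auto simp: add.commute)
qed

lemma relabel_gap:
  assumes y: "y \<le> y'" "\<bar>y\<bar> \<le> R" "\<bar>y'\<bar> \<le> R" and t0: "0 \<le> t0" "t0 \<le> T"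
    and \<delta>: "0 < \<delta>" "\<delta> \<le> 1" and gap: "\<delta> \<le> euler n t0 y' - euler n t0 y"
    and fine: "mesh n \<le> \<delta> / (16 * M)" and long: "T + 2 \<le> real n + 1"
  shows "\<delta>\<^sup>2 / (16 * M * (2 + T)\<^sup>2 * (1 + (R + M * (T + 1))\<^sup>2)) \<le> relabel n y' - relabel n y"
proof -
  define w where "w = \<delta> / (4 * M)"
  define \<kappa> where "\<kappa> = (\<delta> / 2) / (1 + (R + M * (T + 1))\<^sup>2) / (2 + T)\<^sup>2"
  have w: "w \<le> 1/4" "4 * mesh n \<le> w" "4 * M * w = \<delta>"
    using \<delta> fine M_ge_1 by (auto simp: w_def field_simps)
  obtain j0 m where block: "t0 \<le> real j0 * mesh n" "(real j0 + real m) * mesh n \<le> t0 + w"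
      "w / 2 \<le> real m * mesh n"
    using grid_block_within[OF mesh_pos w(2) t0(1)] .
  have term_ge: "mesh n * \<kappa> \<le> weight n j * (arctan (node n y' j) - arctan (node n y j))"
    if j: "j \<in> {j0..<j0+m}" for j
  proof -
    have "real j0 * mesh n \<le> real j * mesh n" "(real j + 1) * mesh n \<le> (real j0 + real m) * mesh n"
      using j mesh_pos[of n] by (auto intro!: mult_right_mono)
    then have j_lo: "t0 \<le> real j * mesh n" and j_hi: "real (Suc j) * mesh n \<le> t0 + w"
      using block by (auto simp: algebra_simps)
    have "4 * M * (real j * mesh n - t0) \<le> 4 * M * w"
      using j_hi mesh_pos[of n] M_ge_1 by (intro mult_left_mono) (auto simp: algebra_simps)
    then have "mesh n / (2 + T)\<^sup>2 * ((\<delta> / 2) / (1 + (R + M * (T + 1))\<^sup>2))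
        \<le> weight n j * (arctan (node n y' j) - arctan (node n y j))"
      using j_hi t0 w by (intro relabel_term_ge[OF y t0(1) j_lo _ gap]) auto
    then show ?thesis by (simp add: \<kappa>_def mult.commute)
  qed
  have "real (j0 + m) * mesh n \<le> real (horizon n) * mesh n"
  proof -
    have "real (horizon n) * mesh n = real n + 1" by (simp add: horizon_def mesh_def field_simps)
    then show ?thesis using block(2) t0 w long by simp
  qed
  then have block_sub: "{j0..<j0+m} \<subseteq> {..<horizon n}" using mesh_pos[of n] by auto
  have "real m * (mesh n * \<kappa>) = (\<Sum>j\<in>{j0..<j0+m}. mesh n * \<kappa>)" by simp
  also have "\<dots> \<le> (\<Sum>j\<in>{j0..<j0+m}. weight n j * (arctan (node n y' j) - arctan (node n y j)))"
    by (rule sum_mono) (rule term_ge)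
  also have "\<dots> \<le> relabel n y' - relabel n y" by (rule relabel_diff_ge_sum[OF y(1) block_sub])
  finally have "real m * mesh n * \<kappa> \<le> relabel n y' - relabel n y" by (simp add: mult.assoc)
  moreover have "w / 2 * \<kappa> \<le> real m * mesh n * \<kappa>"
    using block(3) \<delta> t0 by (intro mult_right_mono) (auto simp: \<kappa>_def)
  moreover have "w / 2 * \<kappa> = \<delta>\<^sup>2 / (16 * M * (2 + T)\<^sup>2 * (1 + (R + M * (T + 1))\<^sup>2))"
    unfolding w_def \<kappa>_def by (simp add: power2_eq_square)
  ultimately show ?thesis by linarith
qed

definition relabel_inv :: "nat \<Rightarrow> real \<Rightarrow> real" where
  "relabel_inv n s = (SOME y. relabel n y = s \<and> \<bar>y - s\<bar> \<le> 2)"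

lemma relabel_inv_exists: "\<exists>y. relabel n y = s \<and> \<bar>y - s\<bar> \<le> 2"
proof -
  have "relabel n (s - 2) \<le> s" "s \<le> relabel n (s + 2)"
    using relabel_close[of n "s-2"] relabel_close[of n "s+2"] by (auto simp: abs_le_iff)
  then obtain y where "s - 2 \<le> y" "y \<le> s + 2" "relabel n y = s"
    using IVT'[of "relabel n" "s-2" s "s+2"] continuous_on_subset[OF relabel_cont] by force
  then show ?thesis by (auto simp: abs_le_iff)
qed

lemma relabel_relabel_inv: "relabel n (relabel_inv n s) = s"
  and relabel_inv_close: "\<bar>relabel_inv n s - s\<bar> \<le> 2"
  using someI_ex[OF relabel_inv_exists[of n s]] unfolding relabel_inv_def by auto

lemma relabel_inv_mono:
  assumes "s \<le> s'"
  shows "relabel_inv n s \<le> relabel_inv n s'"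
proof (rule ccontr)
  assume "\<not> relabel_inv n s \<le> relabel_inv n s'"
  then have "relabel n (relabel_inv n s') \<le> relabel n (relabel_inv n s)" by (intro relabel_mono) simp
  then have "s = s'" using assms by (simp add: relabel_relabel_inv)
  then show False using \<open>\<not> relabel_inv n s \<le> relabel_inv n s'\<close> by simp
qed

lemma relabel_inv_bound: "\<bar>relabel_inv n s\<bar> \<le> \<bar>s\<bar> + 2"
  using relabel_inv_close[of n s] by linarith

definition approx :: "nat \<Rightarrow> real \<Rightarrow> real \<Rightarrow> real" where
  "approx n t s = euler n t (relabel_inv n s)"

lemma approx_mono: "0 \<le> t \<Longrightarrow> s \<le> s' \<Longrightarrow> approx n t s \<le> approx n t s'"
  unfolding approx_def by (intro euler_mono relabel_inv_mono)

lemma approx_lipschitz: "0 \<le> t \<Longrightarrow> 0 \<le> t' \<Longrightarrow> \<bar>approx n t' s - approx n t s\<bar> \<le> M * \<bar>t' - t\<bar>"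
  unfolding approx_def by (rule euler_lipschitz)

lemma approx_bound: "0 \<le> t \<Longrightarrow> \<bar>approx n t s\<bar> \<le> \<bar>s\<bar> + 2 + M * t"
  unfolding approx_def using euler_bound[of t n "relabel_inv n s"] relabel_inv_bound[of n s] by linarith

lemma approx_0_close: "\<bar>approx n 0 s - s\<bar> \<le> 2"
  unfolding approx_def euler_0 by (rule relabel_inv_close)

lemma approx_equicont:
  assumes "0 < e"
  shows "\<exists>d>0. \<exists>N. \<forall>n\<ge>N. \<forall>t s s'. 0 \<le> t \<longrightarrow> t \<le> T \<longrightarrow> \<bar>s\<bar> \<le> R \<longrightarrow> \<bar>s'\<bar> \<le> R \<longrightarrow> \<bar>s - s'\<bar> < d
     \<longrightarrow> \<bar>approx n t s - approx n t s'\<bar> < e"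
proof -
  define \<delta> where "\<delta> = min e 1"
  have \<delta>: "0 < \<delta>" "\<delta> \<le> 1" "\<delta> \<le> e" using assms by (auto simp: \<delta>_def)
  define R' where "R' = \<bar>R\<bar> + 2"
  define d where "d = \<delta>\<^sup>2 / (16 * M * (2 + \<bar>T\<bar>)\<^sup>2 * (1 + (R' + M * (\<bar>T\<bar> + 1))\<^sup>2))"
  have d_pos: "0 < d" unfolding d_def using \<delta> M_ge_1 by (intro divide_pos_pos mult_pos_pos add_pos_nonneg) auto
  define N where "N = nat \<lceil>max (16 * M / \<delta>) (\<bar>T\<bar> + 2)\<rceil>"
  have N: "16 * M / \<delta> \<le> real N" "\<bar>T\<bar> + 2 \<le> real N" unfolding N_def by linarith+
  show ?thesis
  proof (intro exI[of _ d] exI[of _ N] conjI d_pos allI impI)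
    fix n t s s' assume n: "N \<le> n" and t: "0 \<le> t" "t \<le> T" and s: "\<bar>s\<bar> \<le> R" "\<bar>s'\<bar> \<le> R" and ss: "\<bar>s - s'\<bar> < d"
    have fine: "mesh n \<le> \<delta> / (16 * M)"
      using mesh_le_inverse[of "16 * M / \<delta>" n] N n \<delta> M_ge_1 by simp
    have long: "\<bar>T\<bar> + 2 \<le> real n + 1" using N n by simp
    have ordered: "\<bar>approx n t a - approx n t b\<bar> < e"
      if ab: "a \<le> b" "\<bar>a\<bar> \<le> R" "\<bar>b\<bar> \<le> R" "b - a < d" for a b
    proof (rule ccontr)
      assume "\<not> ?thesis"
      then have gap: "\<delta> \<le> euler n t (relabel_inv n b) - euler n t (relabel_inv n a)"
        using approx_mono[OF t(1) ab(1), of n] \<delta>(3) unfolding approx_def by simp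
      have "d \<le> relabel n (relabel_inv n b) - relabel n (relabel_inv n a)"
        unfolding d_def
        by (rule relabel_gap[OF relabel_inv_mono[OF ab(1)] _ _ t(1) _ \<delta>(1,2) gap fine long])
           (use relabel_inv_bound[of n a] relabel_inv_bound[of n b] ab t in \<open>auto simp: R'_def\<close>)
      then show False using ab(4) by (simp add: relabel_relabel_inv)
    qed
    show "\<bar>approx n t s - approx n t s'\<bar> < e"
      using ordered[of s s'] ordered[of s' s] s ss by (cases "s \<le> s'") (auto simp: abs_minus_commute)
  qed
qed

section \<open>Passage to the limit\<close>

lemma approx_subseq_convergent_rat:
  obtains r where "strict_mono r"
    "\<And>t s. t \<in> \<rat> \<Longrightarrow> s \<in> \<rat> \<Longrightarrow> 0 \<le> t \<Longrightarrow> convergent (\<lambda>m. approx (r m) t s)"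
proof -
  define D where "D = {p :: real \<times> real. fst p \<in> \<rat> \<and> snd p \<in> \<rat> \<and> 0 \<le> fst p}"
  have "countable D"
  proof -
    have "D \<subseteq> \<rat> \<times> \<rat>" unfolding D_def by (auto simp: mem_Times_iff)
    moreover have "countable (\<rat> \<times> \<rat> :: (real \<times> real) set)" using countable_rat by blast
    ultimately show ?thesis by (rule countable_subset)
  qed
  define B where "B p = 3 + \<bar>snd p\<bar> + M * fst p" for p :: "real \<times> real"
  have B_pos: "0 < B p" if "0 \<le> fst p" for p using that M_ge_1 by (simp add: B_def add_pos_nonneg)
  define F where "F n p = approx n (fst p) (snd p) / B p" for n p
  have "norm (F n p) \<le> 1" if "p \<in> D" for n p
  proof -
    have p: "0 \<le> fst p" using that by (simp add: D_def)
    have "\<bar>approx n (fst p) (snd p)\<bar> \<le> B p" using approx_bound[OF p, of n "snd p"] by (simp add: B_def)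
    then show ?thesis using B_pos[OF p] by (simp add: F_def abs_divide)
  qed
  then obtain r where r: "strict_mono r" and conv: "\<And>p. p \<in> D \<Longrightarrow> \<exists>l. (\<lambda>m. F (r m) p) \<longlonglongrightarrow> l"
    using function_convergent_subsequence[OF \<open>countable D\<close>, of F 1] by blast
  show ?thesis
  proof (rule that[OF r])
    fix t s :: real assume ts: "t \<in> \<rat>" "s \<in> \<rat>" "0 \<le> t"
    then obtain l where "(\<lambda>m. F (r m) (t, s)) \<longlonglongrightarrow> l" using conv[of "(t, s)"] by (auto simp: D_def)
    then have "(\<lambda>m. B (t, s) * F (r m) (t, s)) \<longlonglongrightarrow> B (t, s) * l" by (rule tendsto_mult_left)
    moreover have "B (t, s) * F (r m) (t, s) = approx (r m) t s" for m
      using B_pos[of "(t, s)"] ts by (simp add: F_def)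
    ultimately show "convergent (\<lambda>m. approx (r m) t s)" unfolding convergent_def by auto
  qed
qed

text \<open>Equicontinuity in the label and Lipschitz continuity in time extend convergence from
rational points to all of \<open>[0,\<infinity>) \<times> \<real>\<close>.\<close>
lemma approx_subseq_convergent:
  assumes r: "strict_mono r"
    and conv_rat: "\<And>t s. t \<in> \<rat> \<Longrightarrow> s \<in> \<rat> \<Longrightarrow> 0 \<le> t \<Longrightarrow> convergent (\<lambda>m. approx (r m) t s)"
    and t: "0 \<le> t"
  shows "convergent (\<lambda>m. approx (r m) t s)"
proof (rule Cauchy_convergent, unfold Cauchy_def, intro allI impI)
  fix e :: real assume e: "0 < e"
  obtain d N where d: "0 < d" and equicont: "\<And>n t' a b. N \<le> n \<Longrightarrow> 0 \<le> t' \<Longrightarrow> t' \<le> t + 1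
      \<Longrightarrow> \<bar>a\<bar> \<le> \<bar>s\<bar> + 1 \<Longrightarrow> \<bar>b\<bar> \<le> \<bar>s\<bar> + 1 \<Longrightarrow> \<bar>a - b\<bar> < d \<Longrightarrow> \<bar>approx n t' a - approx n t' b\<bar> < e / 5"
    using approx_equicont[of "e/5" "t+1" "\<bar>s\<bar>+1"] e by (metis divide_pos_pos zero_less_numeral)
  obtain qs where qs: "qs \<in> \<rat>" "s < qs" "qs < s + min d 1"
    using Rats_dense_in_real[of s "s + min d 1"] d by auto
  obtain qt where qt: "qt \<in> \<rat>" "t < qt" "qt < t + min 1 (e / (5 * M))"
    using Rats_dense_in_real[of t "t + min 1 (e / (5 * M))"] e M_ge_1 by auto
  have "Cauchy (\<lambda>m. approx (r m) qt qs)"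
    using conv_rat[OF qt(1) qs(1)] qt t by (simp add: Cauchy_convergent_iff)
  then obtain K where K: "\<And>m m'. K \<le> m \<Longrightarrow> K \<le> m' \<Longrightarrow> \<bar>approx (r m) qt qs - approx (r m') qt qs\<bar> < e / 5"
    unfolding Cauchy_def dist_real_def using e by (meson divide_pos_pos zero_less_numeral)
  have close: "\<bar>approx (r m) t s - approx (r m) qt qs\<bar> < 2 * e / 5" if m: "N \<le> m" for m
  proof -
    have "N \<le> r m" using m seq_suble[OF r, of m] by simp
    then have label: "\<bar>approx (r m) t s - approx (r m) t qs\<bar> < e / 5"
      by (rule equicont[OF _ t]) (use qs in auto)
    have "\<bar>approx (r m) qt qs - approx (r m) t qs\<bar> \<le> M * \<bar>qt - t\<bar>"
      by (rule approx_lipschitz) (use t qt in auto)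
    also have "\<dots> < M * (e / (5 * M))" using qt M_ge_1 by (intro mult_strict_left_mono) auto
    also have "\<dots> = e / 5" using M_ge_1 by simp
    finally show ?thesis using label by linarith
  qed
  show "\<exists>K. \<forall>m\<ge>K. \<forall>n\<ge>K. dist (approx (r m) t s) (approx (r n) t s) < e"
  proof (intro exI[of _ "max K N"] allI impI)
    fix m n assume "max K N \<le> m" "max K N \<le> n"
    then show "dist (approx (r m) t s) (approx (r n) t s) < e"
      using K[of m n] close[of m] close[of n] unfolding dist_real_def abs_less_iff by auto
  qed
qed

definition subseq :: "nat \<Rightarrow> nat" where
  "subseq = (SOME r. strict_mono r \<and> (\<forall>t s. 0 \<le> t \<longrightarrow> convergent (\<lambda>m. approx (r m) t s)))"

lemma strict_mono_subseq: "strict_mono subseq"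
  and convergent_approx_subseq: "0 \<le> t \<Longrightarrow> convergent (\<lambda>m. approx (subseq m) t s)"
proof -
  obtain r where "strict_mono r" "\<And>t s. t \<in> \<rat> \<Longrightarrow> s \<in> \<rat> \<Longrightarrow> 0 \<le> t \<Longrightarrow> convergent (\<lambda>m. approx (r m) t s)"
    using approx_subseq_convergent_rat by blast
  then have "\<exists>r. strict_mono r \<and> (\<forall>t s. 0 \<le> t \<longrightarrow> convergent (\<lambda>m. approx (r m) t s))"
    using approx_subseq_convergent by blast
  from someI_ex[OF this] show "strict_mono subseq" "0 \<le> t \<Longrightarrow> convergent (\<lambda>m. approx (subseq m) t s)"
    unfolding subseq_def[symmetric] by auto
qed

lemma subseq_ge: "N \<le> m \<Longrightarrow> N \<le> subseq m"
  using seq_suble[OF strict_mono_subseq, of m] by simp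

definition flow :: "real \<Rightarrow> real \<Rightarrow> real" where
  "flow t s = lim (\<lambda>m. approx (subseq m) t s)"

lemma flow_lim: "0 \<le> t \<Longrightarrow> (\<lambda>m. approx (subseq m) t s) \<longlonglongrightarrow> flow t s"
  unfolding flow_def using convergent_approx_subseq by (simp add: convergent_LIMSEQ_iff)

lemma flow_mono:
  assumes "0 \<le> t" "s \<le> s'"
  shows "flow t s \<le> flow t s'"
  by (rule LIMSEQ_le[OF flow_lim[OF assms(1)] flow_lim[OF assms(1)]]) (use approx_mono[OF assms] in auto)

lemma flow_lipschitz:
  assumes "0 \<le> t" "0 \<le> t'"
  shows "\<bar>flow t' s - flow t s\<bar> \<le> M * \<bar>t' - t\<bar>"
proof -
  have "(\<lambda>m. \<bar>approx (subseq m) t' s - approx (subseq m) t s\<bar>) \<longlonglongrightarrow> \<bar>flow t' s - flow t s\<bar>"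
    by (intro tendsto_intros flow_lim assms)
  then show ?thesis by (rule LIMSEQ_le_const2) (use approx_lipschitz[OF assms] in auto)
qed

lemma flow_0_close: "\<bar>flow 0 s - s\<bar> \<le> 2"
proof -
  have "(\<lambda>m. \<bar>approx (subseq m) 0 s - s\<bar>) \<longlonglongrightarrow> \<bar>flow 0 s - s\<bar>"
    by (intro tendsto_intros flow_lim) simp
  then show ?thesis by (rule LIMSEQ_le_const2) (use approx_0_close in auto)
qed

lemma flow_equicont:
  assumes "0 < e"
  shows "\<exists>d>0. \<forall>t s s'. 0 \<le> t \<longrightarrow> t \<le> T \<longrightarrow> \<bar>s\<bar> \<le> R \<longrightarrow> \<bar>s'\<bar> \<le> R \<longrightarrow> \<bar>s - s'\<bar> < d
     \<longrightarrow> \<bar>flow t s - flow t s'\<bar> \<le> e"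
proof -
  obtain d N where d: "0 < d" and equicont: "\<And>n t s s'. N \<le> n \<Longrightarrow> 0 \<le> t \<Longrightarrow> t \<le> T \<Longrightarrow> \<bar>s\<bar> \<le> R
      \<Longrightarrow> \<bar>s'\<bar> \<le> R \<Longrightarrow> \<bar>s - s'\<bar> < d \<Longrightarrow> \<bar>approx n t s - approx n t s'\<bar> < e"
    using approx_equicont[OF assms, of T R] by metis
  show ?thesis
  proof (intro exI[of _ d] conjI d allI impI)
    fix t s s' assume a: "0 \<le> t" "t \<le> T" "\<bar>s\<bar> \<le> R" "\<bar>s'\<bar> \<le> R" "\<bar>s - s'\<bar> < d"
    have "(\<lambda>m. \<bar>approx (subseq m) t s - approx (subseq m) t s'\<bar>) \<longlonglongrightarrow> \<bar>flow t s - flow t s'\<bar>"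
      by (intro tendsto_intros flow_lim a)
    then show "\<bar>flow t s - flow t s'\<bar> \<le> e"
      by (rule LIMSEQ_le_const2) (intro exI[of _ N] allI impI, rule less_imp_le, rule equicont[OF subseq_ge a], simp)
  qed
qed

lemma flow_cont: "continuous_on ({0..} \<times> UNIV) (\<lambda>p. flow (fst p) (snd p))"
proof (unfold continuous_on_iff, intro ballI allI impI)
  fix p :: "real \<times> real" and e :: real assume p: "p \<in> {0..} \<times> UNIV" and e: "0 < e"
  obtain d where d: "0 < d" and equicont: "\<And>t s s'. 0 \<le> t \<Longrightarrow> t \<le> fst p + 1 \<Longrightarrow> \<bar>s\<bar> \<le> \<bar>snd p\<bar> + 1
      \<Longrightarrow> \<bar>s'\<bar> \<le> \<bar>snd p\<bar> + 1 \<Longrightarrow> \<bar>s - s'\<bar> < d \<Longrightarrow> \<bar>flow t s - flow t s'\<bar> \<le> e / 2"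
    using flow_equicont[of "e/2" "fst p + 1" "\<bar>snd p\<bar> + 1"] e by (metis half_gt_zero)
  define d' where "d' = min (min d 1) (e / (2 * M))"
  have d'_pos: "0 < d'" using d e M_ge_1 by (simp add: d'_def)
  show "\<exists>d>0. \<forall>q\<in>{0..} \<times> UNIV. dist q p < d \<longrightarrow> dist (flow (fst q) (snd q)) (flow (fst p) (snd p)) < e"
  proof (intro exI[of _ d'] conjI d'_pos ballI impI)
    fix q :: "real \<times> real" assume q: "q \<in> {0..} \<times> UNIV" and dq: "dist q p < d'"
    have near: "\<bar>fst q - fst p\<bar> < d'" "\<bar>snd q - snd p\<bar> < d'"
      using dist_fst_le[of q p] dist_snd_le[of q p] dq by (simp_all add: dist_real_def)
    have nonneg: "0 \<le> fst q" "0 \<le> fst p" using p q by (auto simp: mem_Times_iff)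
    have label: "\<bar>flow (fst q) (snd q) - flow (fst q) (snd p)\<bar> \<le> e / 2"
      by (rule equicont) (use nonneg near in \<open>auto simp: d'_def abs_less_iff\<close>)
    have "\<bar>flow (fst q) (snd p) - flow (fst p) (snd p)\<bar> \<le> M * \<bar>fst q - fst p\<bar>"
      by (rule flow_lipschitz) (use nonneg in auto)
    also have "\<dots> < M * (e / (2 * M))"
      using near M_ge_1 by (intro mult_strict_left_mono) (auto simp: d'_def)
    also have "\<dots> = e / 2" using M_ge_1 by simp
    finally show "dist (flow (fst q) (snd q)) (flow (fst p) (snd p)) < e"
      using label unfolding dist_real_def by linarith
  qed
qed

lemma flow_0_surj: "surj (flow 0)"
proof -
  have "continuous_on UNIV (\<lambda>s. flow (fst (0::real, s)) (snd (0::real, s)))"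
    by (rule continuous_on_compose2[OF flow_cont]) (auto intro!: continuous_intros)
  then have cont: "continuous_on UNIV (flow 0)" by simp
  have "\<exists>s. flow 0 s = x" for x
  proof -
    have "flow 0 (x - 2) \<le> x" "x \<le> flow 0 (x + 2)"
      using flow_0_close[of "x - 2"] flow_0_close[of "x + 2"] by (auto simp: abs_le_iff)
    then show ?thesis using IVT'[of "flow 0" "x - 2" x "x + 2"] continuous_on_subset[OF cont] by force
  qed
  then show ?thesis unfolding surj_def by metis
qed

lemma flow_slope:
  assumes "0 < e"
  shows "\<exists>\<delta>>0. \<forall>t t'. 0 \<le> t \<longrightarrow> t \<le> T \<longrightarrow> 0 \<le> t' \<longrightarrow> t' \<le> T \<longrightarrow> \<bar>t' - t\<bar> < \<delta>
     \<longrightarrow> \<bar>flow t' s - flow t s - (t' - t) * lam t (flow t s)\<bar> \<le> e * \<bar>t' - t\<bar>"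
proof -
  obtain \<delta> where \<delta>: "0 < \<delta>" and slope: "\<And>n y t t'. mesh n < \<delta> \<Longrightarrow> \<bar>y\<bar> \<le> \<bar>s\<bar> + 2 \<Longrightarrow> 0 \<le> t \<Longrightarrow> t \<le> T
      \<Longrightarrow> 0 \<le> t' \<Longrightarrow> t' \<le> T \<Longrightarrow> \<bar>t' - t\<bar> < \<delta>
      \<Longrightarrow> \<bar>euler n t' y - euler n t y - (t' - t) * lam t (euler n t y)\<bar> \<le> e * \<bar>t' - t\<bar>"
    using euler_slope[OF assms, of "\<bar>s\<bar> + 2" T] by metis
  obtain N where N: "\<And>n. N \<le> n \<Longrightarrow> mesh n < \<delta>" using mesh_eventually_less[OF \<delta>] by blast
  show ?thesis
  proof (intro exI[of _ \<delta>] conjI \<delta> allI impI)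
    fix t t' assume a: "0 \<le> t" "t \<le> T" "0 \<le> t'" "t' \<le> T" "\<bar>t' - t\<bar> < \<delta>"
    have "(\<lambda>m. \<bar>approx (subseq m) t' s - approx (subseq m) t s - (t' - t) * lam t (approx (subseq m) t s)\<bar>)
        \<longlonglongrightarrow> \<bar>flow t' s - flow t s - (t' - t) * lam t (flow t s)\<bar>"
      by (intro tendsto_intros flow_lim a isCont_tendsto_compose[OF lam_isCont[OF a(1)]])
    then show "\<bar>flow t' s - flow t s - (t' - t) * lam t (flow t s)\<bar> \<le> e * \<bar>t' - t\<bar>"
      by (rule LIMSEQ_le_const2)
        (use slope[OF N[OF subseq_ge] relabel_inv_bound a] in \<open>auto simp: approx_def\<close>)
  qed
qed

lemma flow_deriv:
  assumes "0 < t"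
  shows "((\<lambda>\<tau>. flow \<tau> s) has_real_derivative lam t (flow t s)) (at t)"
proof (rule has_real_derivative_if_slope_estimates)
  fix r :: real assume "0 < r"
  then obtain \<delta> where \<delta>: "0 < \<delta>" and slope: "\<And>t1 t'. 0 \<le> t1 \<Longrightarrow> t1 \<le> t + 1 \<Longrightarrow> 0 \<le> t' \<Longrightarrow> t' \<le> t + 1
      \<Longrightarrow> \<bar>t' - t1\<bar> < \<delta> \<Longrightarrow> \<bar>flow t' s - flow t1 s - (t' - t1) * lam t1 (flow t1 s)\<bar> \<le> r * \<bar>t' - t1\<bar>"
    using flow_slope[of r "t + 1" s] by metis
  show "\<exists>\<delta>>0. \<forall>x. \<bar>x - t\<bar> < \<delta> \<longrightarrow> \<bar>flow x s - flow t s - (x - t) * lam t (flow t s)\<bar> \<le> r * \<bar>x - t\<bar>"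
    using assms \<delta> by (intro exI[of _ "min \<delta> (min t 1)"]) (auto intro!: slope simp: abs_less_iff)
qed

end

section \<open>Lagrangian parameterizations\<close>

lemma C2_deriv_continuous: "C2 f \<Longrightarrow> continuous_on UNIV (deriv f)"
  unfolding C2_def
  by (intro continuous_at_imp_continuous_on) (auto intro: differentiable_imp_continuous_within)

lemma char_speed_bounded_speed:
  assumes f: "C2 f" and u_cont: "continuous_on ({0..} \<times> UNIV) u"
    and u_bounded: "bounded (u ` ({0..} \<times> UNIV))"
  obtains M where "bounded_speed (char_speed f u) M"
proof -
  obtain B where B: "\<And>p. p \<in> {0..} \<times> UNIV \<Longrightarrow> \<bar>u p\<bar> \<le> B"
    using u_bounded unfolding bounded_iff by auto
  have "compact (deriv f ` {-B..B})"
    by (rule compact_continuous_image[OF continuous_on_subset[OF C2_deriv_continuous[OF f]]]) auto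
  then have "bounded (deriv f ` {-B..B})" by (rule compact_imp_bounded)
  then obtain M0 where M0: "\<And>x. x \<in> {-B..B} \<Longrightarrow> \<bar>deriv f x\<bar> \<le> M0"
    unfolding bounded_iff by force
  show ?thesis
  proof (rule that[of "max 1 M0"], unfold_locales)
    fix t z :: real assume "0 \<le> t"
    then show "\<bar>char_speed f u t z\<bar> \<le> max 1 M0"
      using B[of "(t, z)"] M0[of "u (t, z)"] by (auto simp: char_speed_def abs_le_iff)
  next
    show "continuous_on ({0..} \<times> UNIV) (\<lambda>p. char_speed f u (fst p) (snd p))"
      unfolding char_speed_def
      by (rule continuous_on_compose2[OF C2_deriv_continuous[OF f]]) (use u_cont in auto)
  qed simp
qed

lemma lagrangian_param_exists:
  assumes "bounded_speed (char_speed f u) M"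
  shows "\<exists>X. lagrangian_param f u X"
proof -
  interpret bounded_speed "char_speed f u" M by (fact assms)
  have "char_curve f u {0..} (\<lambda>t. flow t y)" for y
    unfolding char_curve_def
  proof (intro conjI)
    show "loc_abs_cont_on {0..} (\<lambda>t. flow t y)"
      using M_ge_1 flow_lipschitz by (intro lipschitz_imp_loc_abs_cont_on[of M]) auto
    show "AE t in lborel. t \<in> {0..} \<longrightarrow> ((\<lambda>t. flow t y) has_real_derivative char_speed f u t (flow t y)) (at t)"
      using AE_lborel_singleton[of 0] by eventually_elim (auto intro: flow_deriv)
  qed auto
  moreover have "(\<lambda>p. flow (fst p) (snd p)) ` ({0..} \<times> UNIV) = UNIV"
    using flow_0_surj by (force simp: surj_def)
  ultimately have "lagrangian_param f u (\<lambda>p. flow (fst p) (snd p))"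
    unfolding lagrangian_param_def using flow_cont flow_mono by (auto intro: monoI)
  then show ?thesis by blast
qed

lemma broad_solution_imp_lagrangian_solution:
  assumes "broad_solution f u g" "lagrangian_param f u X"
  shows "lagrangian_solution f u X g"
proof -
  have "interior {0::real..} = {0<..}" by (rule interior_Ici[of "-1"]) simp
  then show ?thesis
    using assms unfolding lagrangian_solution_def broad_solution_def lagrangian_param_def by metis
qed

theorem lemma1p3:
  fixes f :: "real \<Rightarrow> real" and u :: "real \<times> real \<Rightarrow> real"
  assumes "C2 f"
    and "continuous_on ({0..} \<times> UNIV) u"
    and "bounded (u ` ({0..} \<times> UNIV))"
  shows "(\<exists>X. lagrangian_param f u X) \<and>
         (\<forall>g. g \<in> borel_measurable borel \<and> bounded (range g) \<and> broad_solution f u g \<longrightarrow>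
            (\<forall>X. lagrangian_param f u X \<longrightarrow> lagrangian_solution f u X g))"
proof
  obtain M where "bounded_speed (char_speed f u) M"
    using char_speed_bounded_speed[OF assms] .
  then show "\<exists>X. lagrangian_param f u X" by (rule lagrangian_param_exists)
  show "\<forall>g. g \<in> borel_measurable borel \<and> bounded (range g) \<and> broad_solution f u g \<longrightarrow>
      (\<forall>X. lagrangian_param f u X \<longrightarrow> lagrangian_solution f u X g)"
    by (blast intro: broad_solution_imp_lagrangian_solution)
qed

end
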